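(* Let $K_0:(0,\infty)\to\mathbb{R}$ be such that $-K_0'$ is a nonzero completely monotone function, i.e. $-K_0'(t)=\int_0^\infty e^{-tx}\,\mathrm{d}\mu(x)$ for all $t>0$ for a nonnegative Borel measure $\mu$ on $[0,\infty)$, and let $b>0$. Then for every $n\in\mathbb{N}^\star$, $$\lambda_{n,b}:=\int_0^{2\pi}K_0(|b-be^{i\eta}|)\,e^{in\eta}\,\mathrm{d}\eta=2\int_0^\infty\phi_n(bx)\,\frac{\mathrm{d}\mu(x)}{x},\qquad\text{where}\quad \phi_n(x):=\int_0^\pi e^{-2x\sin\eta}\,e^{2in\eta}\,\mathrm{d}\eta.$$
   Context: A function $f:(0,\infty)\to\mathbb{R}$ is completely monotone if it is $C^\infty$ and $(-1)^nf^{(n)}(t)\ge0$ for all $t>0$, $n\ge0$; by Bernstein's theorem such $f$ is the Laplace transform of a nonnegative measure on $[0,\infty)$. *)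

theory Defs
  imports "HOL-Analysis.Analysis"
begin

definition phi :: "nat \<Rightarrow> real \<Rightarrow> complex" where
  "phi n x = (LBINT \<eta>=0..pi. complex_of_real (exp (- 2 * x * sin \<eta>))
                              * exp (\<i> * complex_of_real (2 * real n * \<eta>)))"

text \<open>The integrand phi_n(b x)/x of the right-hand side, extended at x = 0 by its
  limit b * phi_n'(0) = -2 b * integral over [0,pi] of sin eta exp(2 i n eta)
  (relevant only if mu has an atom at 0).\<close>
definition phi_div :: "nat \<Rightarrow> real \<Rightarrow> real \<Rightarrow> complex" where
  "phi_div n b x = (if x = 0
     then - 2 * complex_of_real b * (LBINT \<eta>=0..pi. complex_of_real (sin \<eta>)
                              * exp (\<i> * complex_of_real (2 * real n * \<eta>)))
     else phi n (b * x) / complex_of_real x)"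

end

theory Submission
  imports Defs
begin

(*
  Integrating K0' = -(Laplace transform of \<mu>) from 1 to t and exchanging the two integrals gives
    K0 t = K0 1 - \<integral> (exp (-x) - exp (-t x)) / x d\<mu>(x).
  Insert t = |b - b exp (i \<eta>)| = 2 b sin (\<eta>/2) and integrate against exp (i n \<eta>) over [0, 2\<pi>].
  For fixed t the x-integrand has constant sign, so the absolute integrability that Fubini needs
  reduces to the assumed integrability of \<eta> \<mapsto> K0 |b - b exp (i \<eta>)|. After the exchange, all
  terms independent of \<eta> are killed by \<integral> exp (i n \<eta>) d\<eta> = 0, and the substitution \<eta> = 2\<theta>
  turns the rest into -2 \<phi>\<^sub>n (b x) / x.
*)

definition exp_neg_integral :: "real \<Rightarrow> real \<Rightarrow> real \<Rightarrow> real" where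
  "exp_neg_integral a c x = (if x = 0 then c - a else (exp (- a * x) - exp (- c * x)) / x)"

lemma exp_neg_integral_swap: "exp_neg_integral c a x = - exp_neg_integral a c x"
  by (simp add: exp_neg_integral_def diff_divide_distrib)

lemma set_integral_exp_neg_mult:
  assumes "a \<le> c"
  shows "(LINT s:{a..c}|lborel. exp (- s * x)) = exp_neg_integral a c x"
proof -
  define G where "G = (\<lambda>s. if x = 0 then s else - exp (- s * x) / x)"
  have "(G has_real_derivative exp (- s * x)) (at s)" for s
    unfolding G_def by (cases "x = 0") (auto intro!: derivative_eq_intros simp: field_simps)
  then have "(LBINT s=ereal a..ereal c. exp (- s * x)) = G c - G a"
    by (intro interval_integral_FTC_finite continuous_intros)
      (simp add: has_real_derivative_iff_has_vector_derivative has_vector_derivative_at_within)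
  then show ?thesis
    using assms by (simp add: interval_integral_Icc G_def exp_neg_integral_def diff_divide_distrib)
qed

lemma exp_neg_integral_nonneg:
  assumes "a \<le> c"
  shows "0 \<le> exp_neg_integral a c x"
  unfolding set_integral_exp_neg_mult[OF assms, symmetric] set_lebesgue_integral_def
  by (intro integral_nonneg_AE) (simp add: indicator_def)

lemma integral_abs_exp_neg_integral:
  "(\<integral>x. \<bar>exp_neg_integral a c x\<bar> \<partial>\<mu>) = \<bar>\<integral>x. exp_neg_integral a c x \<partial>\<mu>\<bar>"
proof (cases "a \<le> c")
  case True
  then show ?thesis
    by (simp add: exp_neg_integral_nonneg integral_nonneg_AE)
next
  case False
  then have "c \<le> a" by simp
  then show ?thesis
    by (simp add: exp_neg_integral_swap[of a c] exp_neg_integral_nonneg integral_nonneg_AE)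
qed

lemma set_integral_nonneg_derivative:
  fixes K f :: "real \<Rightarrow> real"
  assumes "a \<le> c" and f [measurable]: "f \<in> borel_measurable borel"
    and "\<And>s. s \<in> {a..c} \<Longrightarrow> (K has_real_derivative f s) (at s)"
    and "\<And>s. s \<in> {a..c} \<Longrightarrow> 0 \<le> f s"
  shows "set_integrable lborel {a..c} f" and "(LINT s:{a..c}|lborel. f s) = K c - K a"
proof -
  have f_has_integral: "(f has_integral K c - K a) {a..c}"
    using assms(1,3)
    by (intro fundamental_theorem_of_calculus)
      (simp_all add: has_real_derivative_iff_has_vector_derivative has_vector_derivative_at_within)
  then have "f absolutely_integrable_on {a..c}"
    using assms(4) by (intro nonnegative_absolutely_integrable_1 has_integral_integrable) auto
  then show f_int: "set_integrable lborel {a..c} f"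
    unfolding set_integrable_def by (subst (asm) integrable_completion) measurable
  show "(LINT s:{a..c}|lborel. f s) = K c - K a"
    using set_borel_integral_eq_integral(2)[OF f_int] f_has_integral by (simp add: integral_unique)
qed

lemma sigma_finite_if_integrable_exp_neg:
  fixes \<mu> :: "real measure"
  assumes [measurable_cong]: "sets \<mu> = sets borel" and "integrable \<mu> (\<lambda>x. exp (- x))"
  shows "sigma_finite_measure \<mu>"
proof -
  define \<nu> where "\<nu> = density \<mu> (\<lambda>x. ennreal (exp (- x)))"
  have "finite_measure \<nu>"
  proof
    have "emeasure \<nu> (space \<nu>) = (\<integral>\<^sup>+x. ennreal (exp (- x)) \<partial>\<mu>)"
      by (simp add: \<nu>_def emeasure_density nn_integral_set_ennreal[symmetric])
    also have "\<dots> < \<infinity>"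
      using assms(2) by (simp add: integrable_iff_bounded)
    finally show "emeasure \<nu> (space \<nu>) \<noteq> \<infinity>" by simp
  qed
  then interpret \<nu>: finite_measure \<nu> .
  have "\<mu> = density \<nu> (\<lambda>x. ennreal (exp x))"
    by (simp add: \<nu>_def density_density_eq ennreal_mult[symmetric] mult_exp_exp density_1)
  then show ?thesis
    using \<nu>.sigma_finite_iff_density_finite[of "\<lambda>x. ennreal (exp x)"] by (simp add: \<nu>_def)
qed

locale neg_laplace_primitive =
  fixes K :: "real \<Rightarrow> real" and \<mu> :: "real measure"
  assumes sets_\<mu>: "sets \<mu> = sets borel"
    and integrable_exp: "\<And>t. t > 0 \<Longrightarrow> integrable \<mu> (\<lambda>x. exp (- t * x))"
    and K_deriv: "\<And>t. t > 0 \<Longrightarrow> (K has_real_derivative - (\<integral>x. exp (- t * x) \<partial>\<mu>)) (at t)"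
begin

declare sets_\<mu> [measurable_cong]

sublocale sigma_finite_measure \<mu>
  using sigma_finite_if_integrable_exp_neg[OF sets_\<mu>] integrable_exp[of 1] by simp

sublocale lborel_\<mu>: pair_sigma_finite lborel \<mu> ..

lemma integrable_exp_neg_integral_and_integral:
  assumes "0 < a" "a \<le> c"
  shows "integrable \<mu> (exp_neg_integral a c) \<and> (\<integral>x. exp_neg_integral a c x \<partial>\<mu>) = K a - K c"
proof -
  define L where "L = (\<lambda>s. \<integral>x. exp (- s * x) \<partial>\<mu>)"
  have [measurable]: "L \<in> borel_measurable borel"
    unfolding L_def by measurable
  have L_nonneg: "0 \<le> L s" for s
    unfolding L_def by (intro integral_nonneg_AE) simp
  have "((\<lambda>s. - K s) has_real_derivative L s) (at s)" if "s \<in> {a..c}" for s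
    using K_deriv[of s] that assms(1) unfolding L_def by (auto intro!: derivative_eq_intros)
  then have L_int: "set_integrable lborel {a..c} L" and L_integral: "(LINT s:{a..c}|lborel. L s) = K a - K c"
    using set_integral_nonneg_derivative[OF assms(2), of L "\<lambda>s. - K s"] L_nonneg by (auto simp: L_def)
  define f where "f = (\<lambda>s x. indicator {a..c} s * exp (- s * x) :: real)"
  have f_int: "integrable (lborel \<Otimes>\<^sub>M \<mu>) (case_prod f)"
  proof (rule lborel_\<mu>.Fubini_integrable)
    show "case_prod f \<in> borel_measurable (lborel \<Otimes>\<^sub>M \<mu>)"
      unfolding f_def by measurable
    have "(\<lambda>s. \<integral>x. norm (f s x) \<partial>\<mu>) = (\<lambda>s. indicator {a..c} s *\<^sub>R L s)"
      by (auto simp: f_def L_def fun_eq_iff indicator_def)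
    then show "integrable lborel (\<lambda>s. \<integral>x. norm (case_prod f (s, x)) \<partial>\<mu>)"
      using L_int unfolding set_integrable_def by simp
    show "AE s in lborel. integrable \<mu> (\<lambda>x. case_prod f (s, x))"
      using assms(1) integrable_exp by (auto simp: f_def indicator_def)
  qed
  have inner: "(\<integral>s. f s x \<partial>lborel) = exp_neg_integral a c x" for x
    using set_integral_exp_neg_mult[OF assms(2), of x] by (simp add: f_def set_lebesgue_integral_def)
  have "(\<integral>x. exp_neg_integral a c x \<partial>\<mu>) = (\<integral>x. \<integral>s. f s x \<partial>lborel \<partial>\<mu>)"
    by (simp add: inner)
  also have "\<dots> = (\<integral>s. \<integral>x. f s x \<partial>\<mu> \<partial>lborel)"
    using lborel_\<mu>.Fubini_integral[OF f_int] by simp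
  also have "\<dots> = (LINT s:{a..c}|lborel. L s)"
    by (simp add: f_def L_def set_lebesgue_integral_def)
  moreover have "integrable \<mu> (exp_neg_integral a c)"
    using lborel_\<mu>.integrable_snd[OF f_int] by (simp add: inner)
  ultimately show ?thesis
    using L_integral by simp
qed

lemma integrable_exp_neg_integral_1_and_K_eq:
  assumes "t > 0"
  shows "integrable \<mu> (exp_neg_integral 1 t) \<and> K t = K 1 - (\<integral>x. exp_neg_integral 1 t x \<partial>\<mu>)"
proof (cases "1 \<le> t")
  case True
  then show ?thesis using integrable_exp_neg_integral_and_integral[of 1 t] by simp
next
  case False
  have "exp_neg_integral 1 t = (\<lambda>x. - exp_neg_integral t 1 x)"
    by (simp add: fun_eq_iff exp_neg_integral_swap[of t 1])
  then show ?thesis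
    using integrable_exp_neg_integral_and_integral[of t 1] assms False by simp
qed

context
  fixes I :: "real set" and r :: "real \<Rightarrow> real" and e :: "real \<Rightarrow> complex" and B :: real
  assumes I_sets [measurable]: "I \<in> sets borel"
    and r_meas [measurable]: "r \<in> borel_measurable borel"
    and e_meas [measurable]: "e \<in> borel_measurable borel"
    and r_pos: "\<And>\<eta>. \<eta> \<in> I \<Longrightarrow> r \<eta> > 0"
    and K_int: "set_integrable lborel I (\<lambda>\<eta>. K (r \<eta>))"
    and e_int: "set_integrable lborel I e"
    and e_bounded: "\<And>\<eta>. \<eta> \<in> I \<Longrightarrow> norm (e \<eta>) \<le> B"
begin

lemma integrable_exp_neg_integral_comp_mult:
  "integrable (lborel \<Otimes>\<^sub>M \<mu>)
     (\<lambda>(\<eta>, x). indicator I \<eta> *\<^sub>R (of_real (exp_neg_integral 1 (r \<eta>) x) * e \<eta>))"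
  (is "integrable _ (case_prod ?H)")
proof (rule lborel_\<mu>.Fubini_integrable)
  show "case_prod ?H \<in> borel_measurable (lborel \<Otimes>\<^sub>M \<mu>)"
    unfolding exp_neg_integral_def by measurable
  \<comment> \<open>the x-integrand has constant sign, so its absolute integral is |K 1 - K (r \<eta>)|\<close>
  have integral_norm:
    "(\<integral>x. norm (?H \<eta> x) \<partial>\<mu>) = indicator I \<eta> * (\<bar>K 1 - K (r \<eta>)\<bar> * norm (e \<eta>))" for \<eta>
  proof (cases "\<eta> \<in> I")
    case True
    then show ?thesis
      using integrable_exp_neg_integral_1_and_K_eq[OF r_pos[OF True]] integral_abs_exp_neg_integral
      by (simp add: norm_mult)
  qed simp
  have bound: "\<bar>K 1 - K (r \<eta>)\<bar> * norm (e \<eta>) \<le> \<bar>K 1\<bar> * norm (e \<eta>) + B * \<bar>K (r \<eta>)\<bar>"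
    if "\<eta> \<in> I" for \<eta>
  proof -
    have "\<bar>K 1 - K (r \<eta>)\<bar> * norm (e \<eta>) \<le> (\<bar>K 1\<bar> + \<bar>K (r \<eta>)\<bar>) * norm (e \<eta>)"
      by (intro mult_right_mono abs_triangle_ineq4) simp
    also have "\<dots> \<le> \<bar>K 1\<bar> * norm (e \<eta>) + B * \<bar>K (r \<eta>)\<bar>"
      using mult_left_mono[OF e_bounded[OF that], of "\<bar>K (r \<eta>)\<bar>"] by (simp add: algebra_simps)
    finally show ?thesis .
  qed
  have "set_integrable lborel I (\<lambda>\<eta>. \<bar>K 1\<bar> * norm (e \<eta>) + B * \<bar>K (r \<eta>)\<bar>)"
    using e_int K_int
    by (intro set_integral_add set_integrable_mult_right set_integrable_norm set_integrable_abs)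
  then have "integrable lborel (\<lambda>\<eta>. indicator I \<eta> * (\<bar>K 1\<bar> * norm (e \<eta>) + B * \<bar>K (r \<eta>)\<bar>))"
    by (simp add: set_integrable_def)
  then show "integrable lborel (\<lambda>\<eta>. \<integral>x. norm (case_prod ?H (\<eta>, x)) \<partial>\<mu>)"
  proof (rule Bochner_Integration.integrable_bound)
    show "AE \<eta> in lborel. norm (\<integral>x. norm (case_prod ?H (\<eta>, x)) \<partial>\<mu>)
        \<le> norm (indicator I \<eta> * (\<bar>K 1\<bar> * norm (e \<eta>) + B * \<bar>K (r \<eta>)\<bar>))"
      unfolding split integral_norm using bound
      by (intro AE_I2) (auto simp: indicator_def intro: order_trans[OF _ abs_ge_self])
  qed (unfold exp_neg_integral_def, measurable)
  show "AE \<eta> in lborel. integrable \<mu> (\<lambda>x. case_prod ?H (\<eta>, x))"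
    using integrable_exp_neg_integral_1_and_K_eq[OF r_pos] by (auto simp: indicator_def)
qed

lemma set_integral_K_comp_mult:
  "(LINT \<eta>:I|lborel. of_real (K (r \<eta>)) * e \<eta>)
    = of_real (K 1) * (LINT \<eta>:I|lborel. e \<eta>)
      - (\<integral>x. (LINT \<eta>:I|lborel. of_real (exp_neg_integral 1 (r \<eta>) x) * e \<eta>) \<partial>\<mu>)"
proof -
  define H where "H = (\<lambda>\<eta> x. indicator I \<eta> *\<^sub>R (of_real (exp_neg_integral 1 (r \<eta>) x) * e \<eta>))"
  have H_int: "integrable (lborel \<Otimes>\<^sub>M \<mu>) (case_prod H)"
    unfolding H_def by (rule integrable_exp_neg_integral_comp_mult)
  have integral_H: "(\<integral>x. H \<eta> x \<partial>\<mu>) = indicator I \<eta> *\<^sub>R (of_real (K 1 - K (r \<eta>)) * e \<eta>)" for \<eta>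
  proof (cases "\<eta> \<in> I")
    case True
    then show ?thesis
      using integrable_exp_neg_integral_1_and_K_eq[OF r_pos[OF True]] by (simp add: H_def)
  qed (simp add: H_def)
  have "(\<lambda>\<eta>. indicator I \<eta> *\<^sub>R (of_real (K 1) * e \<eta>)) = (\<lambda>\<eta>. of_real (K 1) * (indicator I \<eta> *\<^sub>R e \<eta>))"
    by (simp add: fun_eq_iff)
  then have integral_K1: "(\<integral>\<eta>. indicator I \<eta> *\<^sub>R (of_real (K 1) * e \<eta>) \<partial>lborel)
      = of_real (K 1) * (LINT \<eta>:I|lborel. e \<eta>)"
    unfolding set_lebesgue_integral_def by (simp only: integral_mult_right_zero)
  have "(LINT \<eta>:I|lborel. of_real (K (r \<eta>)) * e \<eta>)
      = (\<integral>\<eta>. indicator I \<eta> *\<^sub>R (of_real (K 1) * e \<eta>) - (\<integral>x. H \<eta> x \<partial>\<mu>) \<partial>lborel)"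
    unfolding integral_H set_lebesgue_integral_def
    by (intro Bochner_Integration.integral_cong) (auto simp: indicator_def algebra_simps)
  also have "\<dots> = (\<integral>\<eta>. indicator I \<eta> *\<^sub>R (of_real (K 1) * e \<eta>) \<partial>lborel)
      - (\<integral>\<eta>. (\<integral>x. H \<eta> x \<partial>\<mu>) \<partial>lborel)"
    using set_integrable_mult_right[OF e_int, of "of_real (K 1)"] lborel_\<mu>.integrable_fst[OF H_int]
    unfolding set_integrable_def
    by (intro Bochner_Integration.integral_diff) auto
  also have "(\<integral>\<eta>. (\<integral>x. H \<eta> x \<partial>\<mu>) \<partial>lborel) = (\<integral>x. (\<integral>\<eta>. H \<eta> x \<partial>lborel) \<partial>\<mu>)"
    using lborel_\<mu>.Fubini_integral[OF H_int] by simp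
  finally show ?thesis
    by (simp add: integral_K1 H_def set_lebesgue_integral_def)
qed

end

end

lemma interval_integral_double_arg:
  fixes f :: "real \<Rightarrow> complex" and c :: real
  assumes "0 \<le> c"
  shows "(LBINT x=0..2*c. f x) = 2 * (LBINT x=0..c. f (2 * x))"
proof -
  have "(LBINT x=0..2*c. f x) = (\<integral>x. indicator {0<..<2*c} x *\<^sub>R f x \<partial>lborel)"
    using assms by (simp add: interval_lebesgue_integral_def set_lebesgue_integral_def zero_ereal_def)
  also have "\<dots> = \<bar>2\<bar> *\<^sub>R (\<integral>x. indicator {0<..<2*c} (0 + 2 * x) *\<^sub>R f (0 + 2 * x) \<partial>lborel)"
    by (rule lborel_integral_real_affine) simp
  also have "(\<lambda>x. indicator {0<..<2*c} (0 + 2 * x) *\<^sub>R f (0 + 2 * x)) =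
      (\<lambda>x::real. indicator {0<..<c} x *\<^sub>R f (2 * x))"
    by (auto simp: indicator_def fun_eq_iff)
  also have "(\<integral>x. indicator {0<..<c} x *\<^sub>R f (2 * x) \<partial>lborel) = (LBINT x=0..c. f (2 * x))"
    using assms by (simp add: interval_lebesgue_integral_def set_lebesgue_integral_def zero_ereal_def)
  finally show ?thesis by (simp add: scaleR_conv_of_real)
qed

lemma cmod_sub_mult_exp_double:
  "cmod (of_real b - of_real b * exp (\<i> * of_real (2 * \<theta>))) = 2 * \<bar>b\<bar> * \<bar>sin \<theta>\<bar>"
proof -
  have "of_real b - of_real b * exp (\<i> * of_real (2 * \<theta>)) = Complex (b - b * cos (2 * \<theta>)) (- b * sin (2 * \<theta>))"
    by (simp add: complex_eq_iff Re_exp Im_exp)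
  moreover have "(b - b * cos (2 * \<theta>))\<^sup>2 + (- b * sin (2 * \<theta>))\<^sup>2
      = (2 * b * sin \<theta>)\<^sup>2 * ((sin \<theta>)\<^sup>2 + (cos \<theta>)\<^sup>2)"
    unfolding cos_double_sin sin_double by algebra
  moreover have "(2 * b * sin \<theta>)\<^sup>2 * ((sin \<theta>)\<^sup>2 + (cos \<theta>)\<^sup>2) = (2 * \<bar>b\<bar> * \<bar>sin \<theta>\<bar>)\<^sup>2"
    by (simp add: power_mult_distrib)
  ultimately show ?thesis
    by (simp add: cmod_def)
qed

lemma cmod_sub_mult_exp_pos:
  assumes "b > 0" "0 < \<eta>" "\<eta> < 2 * pi"
  shows "cmod (of_real b - of_real b * exp (\<i> * of_real \<eta>)) > 0"
proof -
  have "sin (\<eta> / 2) > 0"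
    using assms by (intro sin_gt_zero) auto
  then show ?thesis
    using cmod_sub_mult_exp_double[of b "\<eta> / 2"] assms(1) by simp
qed

lemma interval_integral_exp_i_mult_0_pi:
  assumes "n \<noteq> 0"
  shows "(LBINT \<theta>=0..pi. exp (\<i> * of_real (2 * real n * \<theta>))) = 0"
proof -
  define c where "c = 2 * real n * \<i>"
  have "((\<lambda>\<theta>. exp (c * of_real \<theta>) / c) has_vector_derivative exp (c * of_real \<theta>)) (at \<theta> within A)"
    for \<theta> A
    using assms by (auto intro!: has_vector_derivative_real_field derivative_eq_intros simp: c_def)
  then have "(LBINT \<theta>=ereal 0..ereal pi. exp (c * of_real \<theta>)) = exp (c * of_real pi) / c - exp (c * of_real 0) / c"
    by (intro interval_integral_FTC_finite continuous_intros)
  moreover have "exp (c * of_real pi) = 1"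
    using exp_of_nat_mult[of n "2 * of_real pi * \<i>"] by (simp add: c_def mult_ac)
  ultimately show ?thesis
    by (simp add: c_def zero_ereal_def mult_ac)
qed

lemma interval_integral_exp_i_mult_0_2pi:
  assumes "n \<noteq> 0"
  shows "(LBINT \<eta>=0..2*pi. exp (\<i> * of_real (real n * \<eta>))) = 0"
  using interval_integral_double_arg[of pi "\<lambda>\<eta>. exp (\<i> * of_real (real n * \<eta>))"]
    interval_integral_exp_i_mult_0_pi[OF assms]
  by (simp add: mult_ac)

lemma interval_integral_chord_length:
  fixes g :: "real \<Rightarrow> real" and b :: real
  assumes "0 \<le> b"
  shows "(LBINT \<eta>=0..2*pi. of_real (g (cmod (of_real b - of_real b * exp (\<i> * of_real \<eta>))))
            * exp (\<i> * of_real (real n * \<eta>)))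
    = 2 * (LBINT \<theta>=0..pi. of_real (g (2 * b * sin \<theta>)) * exp (\<i> * of_real (2 * real n * \<theta>)))"
proof -
  have "of_real (g (cmod (of_real b - of_real b * exp (\<i> * of_real (2 * \<theta>)))))
      * exp (\<i> * of_real (real n * (2 * \<theta>)))
    = of_real (g (2 * b * sin \<theta>)) * exp (\<i> * of_real (2 * real n * \<theta>))"
    if "0 < \<theta>" "\<theta> < pi" for \<theta>
  proof -
    have "0 \<le> sin \<theta>"
      using that by (intro sin_ge_zero) auto
    then show ?thesis
      using assms cmod_sub_mult_exp_double[of b \<theta>] by (simp add: mult_ac)
  qed
  then have "(LBINT \<theta>=0..pi. of_real (g (cmod (of_real b - of_real b * exp (\<i> * of_real (2 * \<theta>)))))
      * exp (\<i> * of_real (real n * (2 * \<theta>))))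
    = (LBINT \<theta>=0..pi. of_real (g (2 * b * sin \<theta>)) * exp (\<i> * of_real (2 * real n * \<theta>)))"
    by (intro interval_integral_cong) (auto simp: einterval_def zero_ereal_def)
  then show ?thesis
    by (simp add: interval_integral_double_arg)
qed

lemma interval_integral_exp_neg_integral_chord_length:
  fixes b x :: real
  assumes "0 \<le> b" "n \<noteq> 0"
  shows "(LBINT \<eta>=0..2*pi. of_real (exp_neg_integral 1 (cmod (of_real b - of_real b * exp (\<i> * of_real \<eta>))) x)
            * exp (\<i> * of_real (real n * \<eta>)))
    = - 2 * phi_div n b x"
proof -
  define e where "e = (\<lambda>\<theta>. exp (\<i> * of_real (2 * real n * \<theta>)))"
  have integrable: "interval_lebesgue_integrable lborel 0 pi (\<lambda>\<theta>. of_real (f \<theta>) * e \<theta>)"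
    if "continuous_on {0..pi} f" for f
    unfolding zero_ereal_def e_def
    by (intro interval_integrable_continuous_on continuous_intros that) simp
  have e_integrable: "interval_lebesgue_integrable lborel 0 pi e"
    using integrable[of "\<lambda>_. 1"] by simp
  have integral_e: "(LBINT \<theta>=0..pi. e \<theta>) = 0"
    unfolding e_def using assms(2) by (rule interval_integral_exp_i_mult_0_pi)
  have "(LBINT \<theta>=0..pi. of_real (exp_neg_integral 1 (2 * b * sin \<theta>) x) * e \<theta>) = - phi_div n b x"
  proof (cases "x = 0")
    case True
    have "(LBINT \<theta>=0..pi. of_real (exp_neg_integral 1 (2 * b * sin \<theta>) x) * e \<theta>)
        = (LBINT \<theta>=0..pi. 2 * of_real b * (of_real (sin \<theta>) * e \<theta>) - e \<theta>)"
      by (intro interval_integral_cong) (simp add: exp_neg_integral_def True algebra_simps)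
    also have "\<dots> = 2 * of_real b * (LBINT \<theta>=0..pi. of_real (sin \<theta>) * e \<theta>)"
      using integrable[of sin] e_integrable integral_e by (simp add: continuous_intros)
    finally show ?thesis
      by (simp add: phi_div_def True e_def)
  next
    case False
    have "(LBINT \<theta>=0..pi. of_real (exp_neg_integral 1 (2 * b * sin \<theta>) x) * e \<theta>)
        = (LBINT \<theta>=0..pi. of_real (exp (- x) / x) * e \<theta>
             - of_real (exp (- 2 * (b * x) * sin \<theta>)) * e \<theta> / of_real x)"
      by (intro interval_integral_cong) (simp add: exp_neg_integral_def False diff_divide_distrib algebra_simps)
    also have "\<dots> = - (LBINT \<theta>=0..pi. of_real (exp (- 2 * (b * x) * sin \<theta>)) * e \<theta>) / of_real x"
      using integrable[of "\<lambda>\<theta>. exp (- 2 * (b * x) * sin \<theta>)"] e_integrable integral_e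
      by (simp add: continuous_intros)
    finally show ?thesis
      by (simp add: phi_div_def phi_def False e_def)
  qed
  then show ?thesis
    using interval_integral_chord_length[OF assms(1), of "\<lambda>t. exp_neg_integral 1 t x" n]
    by (simp add: e_def)
qed

theorem lemma2p1:
  fixes K0 :: "real \<Rightarrow> real" and \<mu> :: "real measure" and b :: real and n :: nat
  assumes mu_borel: "sets \<mu> = sets borel"
    and mu_supp: "emeasure \<mu> {..<0} = 0"
    and mu_nonzero: "emeasure \<mu> (space \<mu>) \<noteq> 0"
    and laplace_finite: "\<And>t. t > 0 \<Longrightarrow> integrable \<mu> (\<lambda>x. exp (- t * x))"
    and K0_deriv: "\<And>t. t > 0 \<Longrightarrow>
         (K0 has_real_derivative (- (\<integral>x. exp (- t * x) \<partial>\<mu>))) (at t)"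
    and b_pos: "b > 0"
    and n_pos: "n \<ge> 1"
    and lambda_exists: "interval_lebesgue_integrable lborel 0 (2 * pi)
         (\<lambda>\<eta>. K0 (cmod (complex_of_real b - complex_of_real b * exp (\<i> * complex_of_real \<eta>))))"
  shows "(LBINT \<eta>=0..2 * pi. complex_of_real
             (K0 (cmod (complex_of_real b - complex_of_real b * exp (\<i> * complex_of_real \<eta>))))
             * exp (\<i> * complex_of_real (real n * \<eta>)))
         = 2 * (\<integral>x. phi_div n b x \<partial>\<mu>)"
proof -
  interpret neg_laplace_primitive K0 \<mu>
    using mu_borel laplace_finite K0_deriv by unfold_locales
  define r where "r = (\<lambda>\<eta>. cmod (complex_of_real b - complex_of_real b * exp (\<i> * complex_of_real \<eta>)))"
  define e where "e = (\<lambda>\<eta>. exp (\<i> * complex_of_real (real n * \<eta>)))"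
  have r_pos: "r \<eta> > 0" if "\<eta> \<in> {0<..<2*pi}" for \<eta>
    unfolding r_def using that by (intro cmod_sub_mult_exp_pos[OF b_pos]) auto
  have "set_integrable lborel {0<..<2*pi} e"
    using interval_integrable_continuous_on[of 0 "2 * pi" e]
    by (simp add: interval_lebesgue_integrable_def e_def continuous_intros)
  then have "(LBINT \<eta>=0..2*pi. of_real (K0 (r \<eta>)) * e \<eta>)
      = of_real (K0 1) * (LBINT \<eta>=0..2*pi. e \<eta>)
        - (\<integral>x. (LBINT \<eta>=0..2*pi. of_real (exp_neg_integral 1 (r \<eta>) x) * e \<eta>) \<partial>\<mu>)"
    using set_integral_K_comp_mult[of "{0<..<2*pi}" r e 1, OF _ _ _ r_pos] lambda_exists
    by (simp add: interval_lebesgue_integral_def interval_lebesgue_integrable_def zero_ereal_def r_def e_def)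
  also have "\<dots> = 2 * (\<integral>x. phi_div n b x \<partial>\<mu>)"
    using interval_integral_exp_i_mult_0_2pi interval_integral_exp_neg_integral_chord_length[of b n] b_pos n_pos
    by (simp add: r_def e_def)
  finally show ?thesis
    by (simp add: r_def e_def)
qed

end
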